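(* Let $(V, B)$ be a finite-dimensional real or complex symplectic vector space and let $P$ be a linear operator on $V$ that is self-adjoint with respect to $B$. Let $V = \bigoplus_\lambda V^\lambda$ be the decomposition of $V$ into generalized eigenspaces of $P$. Then a subspace $W \subset V$ is invariant under $\mathrm{Aut}(V, B, P)$ if and only if $W = \bigoplus_\lambda (W \cap V^\lambda)$ and each $W \cap V^\lambda$ is an invariant subspace of $(V^\lambda, B|_{V^\lambda}, P|_{V^\lambda})$.
   Context: $P$ self-adjoint with respect to $B$ means $B(Pu, v) = B(u, Pv)$ for all $u, v$. $\mathrm{Aut}(V, B, P)$ is the group of linear automorphisms of $V$ preserving $B$ and commuting with $P$ (equivalently, preserving both $B$ and the form $A(u,v) = B(Pu,v)$); a subspace is invariant if it is preserved by this group. The generalized eigenspace for an eigenvalue $\lambda$ is $\operatorname{Ker}(P - \lambda E)^N$ for $N$ sufficiently large. In the real case, generalized eigenspaces are taken either for real eigenvalues $\lambda$, or for pairs of complex conjugate eigenvalues $\alpha \pm i\beta$, in which case the generalized eigenspace is $\operatorname{Ker}(P^2 - 2\alpha P + (\alpha^2+\beta^2)E)^N$ for large $N$. *)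

theory Defs
  imports "HOL-Analysis.Analysis"
begin

text \<open>The bilinear form on 'a^'n with Gram matrix G (no conjugation: bilinear, not sesquilinear).
Every bilinear form on a finite-dimensional coordinate space is of this shape.\<close>
definition bform :: "'a::field^'n^'n \<Rightarrow> 'a^'n \<Rightarrow> 'a^'n \<Rightarrow> 'a" where
  "bform G u v = (\<Sum>i\<in>UNIV. u $ i * (G *v v) $ i)"

definition symplectic :: "'a::field^'n^'n \<Rightarrow> bool" where
  "symplectic G \<longleftrightarrow> (\<forall>u. bform G u u = 0) \<and> (\<forall>u. (\<forall>v. bform G u v = 0) \<longrightarrow> u = 0)"

definition self_adjoint :: "'a::field^'n^'n \<Rightarrow> 'a^'n^'n \<Rightarrow> bool" where
  "self_adjoint G P \<longleftrightarrow> (\<forall>u v. bform G (P *v u) v = bform G u (P *v v))"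

definition aut_on :: "('a::field^'n) set \<Rightarrow> 'a^'n^'n \<Rightarrow> 'a^'n^'n \<Rightarrow> ('a^'n \<Rightarrow> 'a^'n) \<Rightarrow> bool" where
  "aut_on S G P g \<longleftrightarrow>
     (\<forall>u\<in>S. \<forall>v\<in>S. g (u + v) = g u + g v) \<and>
     (\<forall>c. \<forall>u\<in>S. g (c *s u) = c *s g u) \<and>
     bij_betw g S S \<and>
     (\<forall>u\<in>S. \<forall>v\<in>S. bform G (g u) (g v) = bform G u v) \<and>
     (\<forall>u\<in>S. g (P *v u) = P *v g u)"

definition aut_invariant :: "('a::field^'n) set \<Rightarrow> 'a^'n^'n \<Rightarrow> 'a^'n^'n \<Rightarrow> ('a^'n) set \<Rightarrow> bool" where
  "aut_invariant S G P W \<longleftrightarrow> (\<forall>g. aut_on S G P g \<longrightarrow> g ` W \<subseteq> W)"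

definition gen_eigenspace :: "'a::field^'n^'n \<Rightarrow> 'a \<Rightarrow> ('a^'n) set" where
  "gen_eigenspace P c = {v. \<exists>N. ((\<lambda>x. P *v x - c *s x) ^^ N) v = 0}"

text \<open>Real case, pair a \<plusminus> ib: Ker (P^2 - 2aP + (a^2+b^2)E)^N, N large.\<close>
definition gen_eigenspace_pair :: "real^'n^'n \<Rightarrow> real \<Rightarrow> real \<Rightarrow> (real^'n) set" where
  "gen_eigenspace_pair P a b =
     {v. \<exists>N. ((\<lambda>x. P *v (P *v x) - (2 * a) *s (P *v x) + (a^2 + b^2) *s x) ^^ N) v = 0}"

text \<open>The summands V^\<lambda> of the generalized eigenspace decomposition (the nonzero ones,
i.e. those belonging to actual eigenvalues / conjugate pairs of eigenvalues).\<close>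
definition gen_eigenspaces_complex :: "complex^'n^'n \<Rightarrow> (complex^'n) set set" where
  "gen_eigenspaces_complex P = {S. S \<noteq> {0} \<and> (\<exists>c. S = gen_eigenspace P c)}"

definition gen_eigenspaces_real :: "real^'n^'n \<Rightarrow> (real^'n) set set" where
  "gen_eigenspaces_real P = {S. S \<noteq> {0} \<and>
     ((\<exists>c. S = gen_eigenspace P c) \<or> (\<exists>a b. b > 0 \<and> S = gen_eigenspace_pair P a b))}"

end

(* Let r range over the monic irreducible polynomials and put V_r = ker r(P)^N for N large.
   Each r(P) is B-self-adjoint and commutes with every linear map commuting with P, so every
   automorphism preserves every V_r; and r(P) is invertible on the sum T of the other
   components, so V_r is B-orthogonal to T and V = V_r + T directly.  Hence an automorphism
   of V_r extended by the identity on T is an automorphism of V: invariance of W gives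
   invariance of W \<inter> V_r, and applied to -1 on V_r it shows that W contains the V_r-components
   of its vectors, i.e. W is the sum of the W \<inter> V_r.  Conversely automorphisms of V restrict
   to automorphisms of each V_r.  Over \<complex> the V_r are the generalized eigenspaces of P, over
   \<real> also the ones for pairs \<alpha> \<plusminus> i\<beta>, since the monic irreducibles are x - \<lambda> and
   x^2 - 2\<alpha>x + \<alpha>^2 + \<beta>^2 with \<beta> > 0. *)

theory Submission
  imports Defs "HOL-Computational_Algebra.Polynomial_Factorial"
    "HOL-Computational_Algebra.Fundamental_Theorem_Algebra" "HOL-Computational_Algebra.Field_as_Ring"
begin

section \<open>Linear maps and automorphisms\<close>

abbreviation vec_linear :: "('a::field^'n \<Rightarrow> 'a^'n) \<Rightarrow> bool" where
  "vec_linear f \<equiv> Vector_Spaces.linear ((*s) :: 'a \<Rightarrow> 'a^'n \<Rightarrow> 'a^'n) (*s) f"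

lemma vec_linearI:
  fixes f :: "'a::field^'n \<Rightarrow> 'a^'n"
  assumes "\<And>x y. f (x + y) = f x + f y" and "\<And>c x. f (c *s x) = c *s f x"
  shows "vec_linear f"
  using assms by (simp add: Vector_Spaces.linear_iff vec.vector_space_axioms)

lemma vec_linear_funpow: "vec_linear f \<Longrightarrow> vec_linear (f ^^ n)"
  by (induction n) (auto simp: vec.linear_id intro: Vector_Spaces.linear_compose)

lemma linear_image_eq_if_inj_on:
  assumes f: "vec_linear f" and S: "vec.subspace S" and "f ` S \<subseteq> S" and "inj_on f S"
  shows "f ` S = S"
proof (rule vec.subspace_dim_equal[OF vec.linear_subspace_image[OF f S] S \<open>f ` S \<subseteq> S\<close>])
  have "vec.span S = S" using S by (simp only: vec.span_eq_iff)
  then have "inj_on f (vec.span S)" using \<open>inj_on f S\<close> by (simp only:)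
  then show "vec.dim S \<le> vec.dim (f ` S)" by (simp add: vec.dim_image_eq[OF f])
qed

lemma vec_linear_aut_on: "aut_on UNIV G P g \<Longrightarrow> vec_linear g"
  by (rule vec_linearI) (simp_all add: aut_on_def)

lemma aut_on_restrict:
  assumes g: "aut_on UNIV G P g" and S: "vec.subspace S" and "g ` S \<subseteq> S"
  shows "aut_on S G P g"
proof -
  have "inj_on g S" using g by (simp add: aut_on_def bij_betw_def inj_on_def)
  then have "g ` S = S"
    by (rule linear_image_eq_if_inj_on[OF vec_linear_aut_on[OF g] S \<open>g ` S \<subseteq> S\<close>])
  then show ?thesis using g \<open>inj_on g S\<close> by (simp add: aut_on_def bij_betw_def)
qed

lemma vec_family_dependent:
  fixes f :: "nat \<Rightarrow> 'a::field^'n"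
  defines "n \<equiv> vec.dim (UNIV :: ('a^'n) set)"
  shows "\<exists>c. (\<exists>i\<le>n. c i \<noteq> 0) \<and> (\<Sum>i\<le>n. c i *s f i) = 0"
proof (cases "inj_on f {..n}")
  case True
  have "vec.dim (f ` {..n}) \<le> n" unfolding n_def by (rule vec.dim_subset) simp
  moreover have "card (f ` {..n}) = Suc n" using card_image[OF True] by simp
  ultimately have "vec.dependent (f ` {..n})" by (intro vec.dependent_biggerset_general) simp
  then obtain u where "\<exists>w\<in>f ` {..n}. u w \<noteq> 0" "(\<Sum>w\<in>f ` {..n}. u w *s w) = 0"
    using vec.dependent_finite by blast
  then show ?thesis
    by (intro exI[of _ "u \<circ> f"]) (auto simp: sum.reindex[OF True])
next
  case False
  then obtain i j where ij: "i \<le> n" "j \<le> n" "i \<noteq> j" "f i = f j"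
    unfolding inj_on_def by auto
  define c :: "nat \<Rightarrow> 'a" where "c k = (if k = i then 1 else if k = j then -1 else 0)" for k
  have "c k *s f k = (if k = i then f k else 0) - (if k = j then f k else 0)" for k
    using ij(3) by (simp add: c_def)
  then have "(\<Sum>k\<le>n. c k *s f k) = f i - f j"
    using ij(1,2) by (simp add: sum_subtractf)
  then show ?thesis using ij by (intro exI[of _ c]) (auto simp: c_def)
qed

lemma matrix_vector_mult_span:
  assumes "\<And>x. x \<in> A \<Longrightarrow> P *v x \<in> A" and "x \<in> vec.span A"
  shows "P *v x \<in> vec.span A"
proof -
  have "(*v) P ` vec.span A \<subseteq> vec.span ((*v) P ` A)"
    by (rule vec.linear_spans_image[OF matrix_vector_mul_linear_gen]) (rule order_refl)
  also have "\<dots> \<subseteq> vec.span A" using assms(1) by (intro vec.span_mono) blast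
  finally show ?thesis using assms(2) by blast
qed

section \<open>Generalized kernels\<close>

definition gen_kernel :: "('a::field^'n \<Rightarrow> 'a^'n) \<Rightarrow> ('a^'n) set" where
  "gen_kernel f = {v. \<exists>N. (f ^^ N) v = 0}"

lemma funpow_eq_0_mono:
  assumes f: "vec_linear f" and "(f ^^ m) v = 0" and "m \<le> n"
  shows "(f ^^ n) v = 0"
proof -
  have "(f ^^ n) v = (f ^^ (n - m)) ((f ^^ m) v)"
    using \<open>m \<le> n\<close> funpow_add[of "n - m" m f] by simp
  then show ?thesis using assms(2) vec.linear_0[OF vec_linear_funpow[OF f]] by simp
qed

lemma subspace_gen_kernel:
  assumes f: "vec_linear f"
  shows "vec.subspace (gen_kernel f)"
  unfolding vec.subspace_def
proof (intro conjI ballI allI)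
  show "0 \<in> gen_kernel f" unfolding gen_kernel_def by (auto intro: exI[of _ 0])
next
  fix x y assume "x \<in> gen_kernel f" "y \<in> gen_kernel f"
  then obtain m n where x: "(f ^^ m) x = 0" and y: "(f ^^ n) y = 0"
    unfolding gen_kernel_def by blast
  have "(f ^^ max m n) x = 0" "(f ^^ max m n) y = 0"
    using funpow_eq_0_mono[OF f x] funpow_eq_0_mono[OF f y] by simp_all
  then have "(f ^^ max m n) (x + y) = 0" by (simp add: vec.linear_add[OF vec_linear_funpow[OF f]])
  then show "x + y \<in> gen_kernel f" unfolding gen_kernel_def by blast
next
  fix c x assume "x \<in> gen_kernel f"
  then obtain n where "(f ^^ n) x = 0" unfolding gen_kernel_def by blast
  then have "(f ^^ n) (c *s x) = 0" by (simp add: vec.linear_scale[OF vec_linear_funpow[OF f]])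
  then show "c *s x \<in> gen_kernel f" unfolding gen_kernel_def by blast
qed

lemma gen_kernel_uniform:
  assumes f: "vec_linear f"
  obtains N where "\<And>v. v \<in> gen_kernel f \<Longrightarrow> (f ^^ N) v = 0"
proof -
  obtain B where B: "B \<subseteq> gen_kernel f" "vec.independent B" "gen_kernel f \<subseteq> vec.span B"
    by (rule vec.maximal_independent_subset)
  have "finite B" using vec.independent_bound_general[OF B(2)] by blast
  have "\<forall>b\<in>B. \<exists>n. (f ^^ n) b = 0" using B(1) unfolding gen_kernel_def by blast
  then obtain n where n: "\<forall>b\<in>B. (f ^^ n b) b = 0" by (metis bchoice)
  define N where "N = Max (n ` B)"
  have "(f ^^ N) b = 0" if "b \<in> B" for b
  proof (rule funpow_eq_0_mono[OF f])
    show "(f ^^ n b) b = 0" "n b \<le> N" using n that \<open>finite B\<close> unfolding N_def by simp_all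
  qed
  then have "B \<subseteq> {v. (f ^^ N) v = 0}" by blast
  then have "vec.span B \<subseteq> {v. (f ^^ N) v = 0}"
    by (rule vec.span_minimal[OF _ vec.linear_subspace_kernel[OF vec_linear_funpow[OF f]]])
  then show ?thesis using B(3) that by blast
qed

lemma image_gen_kernel_subset:
  assumes g: "vec_linear g" and comm: "\<And>x. g (f x) = f (g x)"
  shows "g ` gen_kernel f \<subseteq> gen_kernel f"
proof
  fix y assume "y \<in> g ` gen_kernel f"
  then obtain x n where "y = g x" "(f ^^ n) x = 0" unfolding gen_kernel_def by blast
  moreover have "g ((f ^^ n) x) = (f ^^ n) (g x)"
    by (induction n) (simp_all add: comm)
  ultimately have "(f ^^ n) y = 0" using vec.linear_0[OF g] by simp
  then show "y \<in> gen_kernel f" unfolding gen_kernel_def by blast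
qed

lemma mem_of_image_mem_gen_kernel:
  assumes f: "vec_linear f" and "gen_kernel f \<subseteq> U"
    and U: "U \<subseteq> {x + k | x k. x \<in> f ` U \<and> k \<in> gen_kernel f}"
    and "vec.subspace U" and "f v \<in> U"
  shows "v \<in> U"
proof -
  obtain y k where "y \<in> U" "k \<in> gen_kernel f" "f v = f y + k" using U \<open>f v \<in> U\<close> by blast
  then obtain n where "(f ^^ n) (f (v - y)) = 0"
    unfolding gen_kernel_def by (force simp: vec.linear_diff[OF f])
  then have "(f ^^ Suc n) (v - y) = 0" by (simp only: funpow_Suc_right o_apply)
  then have "v - y \<in> gen_kernel f" unfolding gen_kernel_def by blast
  then have "(v - y) + y \<in> U" using assms(2,4) \<open>y \<in> U\<close> by (blast intro: vec.subspace_add)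
  then show ?thesis by simp
qed

section \<open>Orthogonal splittings\<close>

lemma bform_add_left: "bform G (u + w) v = bform G u v + bform G w v"
  by (simp add: bform_def distrib_right sum.distrib)

lemma bform_add_right: "bform G u (v + w) = bform G u v + bform G u w"
  by (simp add: bform_def matrix_vector_right_distrib distrib_left sum.distrib)

lemma bform_scale_left: "bform G (c *s u) v = c * bform G u v"
  by (simp add: bform_def sum_distrib_left mult.assoc)

lemma bform_scale_right: "bform G u (c *s v) = c * bform G u v"
  by (simp add: bform_def vector_scalar_commute sum_distrib_left algebra_simps)

lemma bform_0_left [simp]: "bform G 0 v = 0"
  by (simp add: bform_def)

lemma bform_0_right [simp]: "bform G u 0 = 0"
  by (simp add: bform_def)

locale orthogonal_splitting =
  fixes G P :: "'a::field^'n^'n" and S T :: "('a^'n) set"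
  assumes subspace_S: "vec.subspace S" and subspace_T: "vec.subspace T"
    and inter_eq_0: "\<And>x. x \<in> S \<Longrightarrow> x \<in> T \<Longrightarrow> x = 0"
    and sum_eq_UNIV: "\<And>w. \<exists>s\<in>S. w - s \<in> T"
    and P_S: "\<And>x. x \<in> S \<Longrightarrow> P *v x \<in> S" and P_T: "\<And>x. x \<in> T \<Longrightarrow> P *v x \<in> T"
    and orthogonal: "\<And>s t. s \<in> S \<Longrightarrow> t \<in> T \<Longrightarrow> bform G s t = 0 \<and> bform G t s = 0"
begin

definition proj :: "'a^'n \<Rightarrow> 'a^'n" where
  "proj w = (THE s. s \<in> S \<and> w - s \<in> T)"

lemma proj_unique:
  assumes "s \<in> S" and "w - s \<in> T"
  shows "proj w = s"
  unfolding proj_def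
proof (rule the_equality)
  fix s' assume s': "s' \<in> S \<and> w - s' \<in> T"
  have "s' - s \<in> S" using s' assms(1) subspace_S by (blast intro: vec.subspace_diff)
  moreover have "(w - s) - (w - s') \<in> T" using s' assms(2) subspace_T by (blast intro: vec.subspace_diff)
  ultimately show "s' = s" using inter_eq_0[of "s' - s"] by simp
qed (use assms in blast)

lemma proj_mem: "proj w \<in> S" and diff_proj_mem: "w - proj w \<in> T"
  using sum_eq_UNIV[of w] proj_unique by auto

lemma proj_add: "proj (u + v) = proj u + proj v"
proof (rule proj_unique)
  show "proj u + proj v \<in> S" using proj_mem subspace_S by (blast intro: vec.subspace_add)
  have "(u - proj u) + (v - proj v) \<in> T" using diff_proj_mem subspace_T by (blast intro: vec.subspace_add)
  then show "u + v - (proj u + proj v) \<in> T" by (simp add: algebra_simps)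
qed

lemma proj_scale: "proj (c *s u) = c *s proj u"
proof (rule proj_unique)
  show "c *s proj u \<in> S" using proj_mem subspace_S by (blast intro: vec.subspace_scale)
  have "c *s (u - proj u) \<in> T" using diff_proj_mem subspace_T by (blast intro: vec.subspace_scale)
  then show "c *s u - c *s proj u \<in> T" by (simp add: vec.scale_right_diff_distrib)
qed

lemma proj_matrix_vector_mult: "proj (P *v u) = P *v proj u"
proof (rule proj_unique)
  show "P *v proj u \<in> S" using proj_mem P_S by blast
  have "P *v (u - proj u) \<in> T" using diff_proj_mem P_T by blast
  then show "P *v u - P *v proj u \<in> T" by (simp add: matrix_vector_mult_diff_distrib)
qed

definition extend :: "('a^'n \<Rightarrow> 'a^'n) \<Rightarrow> 'a^'n \<Rightarrow> 'a^'n" where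
  "extend h w = h (proj w) + (w - proj w)"

lemma extend_eq: "x \<in> S \<Longrightarrow> extend h x = h x"
  unfolding extend_def using proj_unique[of x x] vec.subspace_0[OF subspace_T] by simp

lemma proj_extend: "h ` S \<subseteq> S \<Longrightarrow> proj (extend h w) = h (proj w)"
  unfolding extend_def using proj_mem diff_proj_mem by (intro proj_unique) auto

lemma bform_decompose: "bform G u v = bform G (proj u) (proj v) + bform G (u - proj u) (v - proj v)"
proof -
  have "bform G u v = bform G (proj u + (u - proj u)) (proj v + (v - proj v))" by simp
  also have "\<dots> = bform G (proj u) (proj v) + bform G (u - proj u) (proj v)
      + (bform G (proj u) (v - proj v) + bform G (u - proj u) (v - proj v))"
    by (simp only: bform_add_left bform_add_right)
  finally show ?thesis using orthogonal[OF proj_mem diff_proj_mem] by simp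
qed

lemma bij_extend:
  assumes bij: "bij_betw h S S"
  shows "bij (extend h)"
proof (rule bijI)
  have hS: "h ` S \<subseteq> S" using bij by (simp add: bij_betw_def)
  show "inj (extend h)"
  proof (rule injI)
    fix u v assume eq: "extend h u = extend h v"
    then have "h (proj u) = h (proj v)" using proj_extend[OF hS] by metis
    then have "proj u = proj v" using bij proj_mem unfolding bij_betw_def inj_on_def by blast
    then show "u = v" using eq unfolding extend_def by (simp add: \<open>h (proj u) = h (proj v)\<close>)
  qed
  show "surj (extend h)"
  proof (rule surj_def[THEN iffD2, rule_format])
    fix w
    obtain s where "s \<in> S" "h s = proj w" using bij proj_mem by (metis bij_betw_imp_surj_on imageE)
    then have "extend h (s + (w - proj w)) = w"
      unfolding extend_def using proj_unique[OF \<open>s \<in> S\<close>] diff_proj_mem by simp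
    then show "\<exists>x. w = extend h x" by metis
  qed
qed

lemma aut_on_extend:
  assumes "aut_on S G P h"
  shows "aut_on UNIV G P (extend h)"
proof -
  have add: "\<And>u v. u \<in> S \<Longrightarrow> v \<in> S \<Longrightarrow> h (u + v) = h u + h v"
    and scale: "\<And>c u. u \<in> S \<Longrightarrow> h (c *s u) = c *s h u"
    and bij: "bij_betw h S S"
    and B: "\<And>u v. u \<in> S \<Longrightarrow> v \<in> S \<Longrightarrow> bform G (h u) (h v) = bform G u v"
    and P: "\<And>u. u \<in> S \<Longrightarrow> h (P *v u) = P *v h u"
    using assms unfolding aut_on_def by blast+
  have hS: "h ` S \<subseteq> S" using bij by (simp add: bij_betw_def)
  have "bform G (extend h u) (extend h v) = bform G u v" for u v
    using bform_decompose[of "extend h u" "extend h v"] bform_decompose[of u v]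
    by (simp add: proj_extend[OF hS] B proj_mem, simp add: extend_def)
  with bij_extend[OF bij] show ?thesis
    unfolding aut_on_def
    by (simp add: extend_def proj_add proj_scale proj_matrix_vector_mult add scale P proj_mem
        algebra_simps vec.scale_right_diff_distrib matrix_vector_right_distrib
        matrix_vector_mult_diff_distrib)
qed

lemma aut_invariant_inter:
  assumes "aut_invariant UNIV G P W"
  shows "aut_invariant S G P (W \<inter> S)"
  unfolding aut_invariant_def
proof (intro allI impI)
  fix h assume h: "aut_on S G P h"
  then have "h ` S \<subseteq> S" by (simp add: aut_on_def bij_betw_def)
  moreover have "extend h ` W \<subseteq> W" using assms aut_on_extend[OF h] unfolding aut_invariant_def by blast
  ultimately show "h ` (W \<inter> S) \<subseteq> W \<inter> S"
  proof (intro image_subsetI IntI)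
    fix x assume "x \<in> W \<inter> S"
    then show "h x \<in> S" using \<open>h ` S \<subseteq> S\<close> by blast
    have "extend h x \<in> W" using \<open>x \<in> W \<inter> S\<close> \<open>extend h ` W \<subseteq> W\<close> by blast
    then show "h x \<in> W" using extend_eq \<open>x \<in> W \<inter> S\<close> by simp
  qed
qed

lemma aut_on_uminus: "aut_on S G P uminus"
proof -
  have "bij_betw uminus S S"
    by (rule bij_betwI[where g = uminus]) (auto intro: vec.subspace_neg[OF subspace_S])
  moreover have "bform G (- u) (- v) = bform G u v" for u v
    by (simp add: bform_def vec.linear_neg[OF matrix_vector_mul_linear_gen] sum_negf)
  ultimately show ?thesis
    unfolding aut_on_def by (simp add: vec.linear_neg[OF matrix_vector_mul_linear_gen])
qed

lemma double_proj_mem_aut_invariant: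
  assumes W: "vec.subspace W" and "aut_invariant UNIV G P W" and "w \<in> W"
  shows "2 *s proj w \<in> W"
proof -
  have "extend uminus w \<in> W"
    using assms(2,3) aut_on_extend[OF aut_on_uminus] unfolding aut_invariant_def by blast
  then have "w - extend uminus w \<in> W" using W \<open>w \<in> W\<close> by (blast intro: vec.subspace_diff)
  moreover have "w - extend uminus w = 2 *s proj w"
    unfolding extend_def by (simp add: algebra_simps vec.scale_left_distrib[of 1 1, simplified])
  ultimately show ?thesis by simp
qed

end

lemma span_Union_subspaces_sum:
  assumes sub: "\<And>S. S \<in> F \<Longrightarrow> vec.subspace S" and w: "w \<in> vec.span (\<Union>F)"
  shows "\<exists>SS x. finite SS \<and> SS \<subseteq> F \<and> (\<forall>S\<in>SS. x S \<in> S) \<and> w = (\<Sum>S\<in>SS. x S)"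
proof -
  obtain A u where A: "finite A" "A \<subseteq> \<Union>F" and w_eq: "w = (\<Sum>a\<in>A. u a *s a)"
    using w unfolding vec.span_explicit by blast
  have "\<forall>a\<in>A. \<exists>S. S \<in> F \<and> a \<in> S" using A(2) by blast
  then obtain \<sigma> where \<sigma>: "\<forall>a\<in>A. \<sigma> a \<in> F \<and> a \<in> \<sigma> a" by (metis bchoice)
  define x where "x S = (\<Sum>a\<in>{a \<in> A. \<sigma> a = S}. u a *s a)" for S
  have "x S \<in> S" if "S \<in> \<sigma> ` A" for S
    unfolding x_def using that \<sigma> sub
    by (intro vec.subspace_sum[OF sub] vec.subspace_scale[OF sub]) auto
  moreover have "w = (\<Sum>S\<in>\<sigma> ` A. x S)"
    unfolding w_eq x_def using A(1) by (simp add: sum.group)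
  ultimately show ?thesis using A(1) \<sigma> by (intro exI[of _ "\<sigma> ` A"] exI[of _ x]) auto
qed

lemma mem_span_components_if_aut_invariant:
  fixes G P :: "'a::field^'n^'n"
  assumes "(2::'a) \<noteq> 0" and span: "vec.span (\<Union>F) = UNIV"
    and splitting: "\<And>S. S \<in> F \<Longrightarrow> orthogonal_splitting G P S (vec.span (\<Union>(F - {S})))"
    and W: "vec.subspace W" "aut_invariant UNIV G P W" and "w \<in> W"
  shows "w \<in> vec.span (\<Union>S\<in>F. W \<inter> S)"
proof -
  have sub: "\<And>S. S \<in> F \<Longrightarrow> vec.subspace S"
    using splitting orthogonal_splitting.subspace_S by blast
  have "w \<in> vec.span (\<Union>F)" using span by simp
  from span_Union_subspaces_sum[OF sub this]
  obtain SS x where SS: "finite SS" "SS \<subseteq> F" and x: "\<forall>S\<in>SS. x S \<in> S"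
    and w: "w = (\<Sum>S\<in>SS. x S)"
    by blast
  have "x S \<in> W" if "S \<in> SS" for S
  proof -
    interpret orthogonal_splitting G P S "vec.span (\<Union>(F - {S}))"
      using splitting SS(2) that by blast
    have "w - x S = (\<Sum>S'\<in>SS - {S}. x S')" using w SS(1) that by (simp add: sum.remove)
    also have "\<dots> \<in> vec.span (\<Union>(F - {S}))"
      using SS(2) x by (intro vec.span_sum vec.span_base) blast
    finally have "proj w = x S" using x that by (intro proj_unique) auto
    moreover have "(1 / 2) *s (2 *s proj w) \<in> W"
      using double_proj_mem_aut_invariant[OF W \<open>w \<in> W\<close>] W(1) by (rule vec.subspace_scale[rotated])
    ultimately show ?thesis using assms(1) by (simp add: vec.scale_scale)
  qed
  then show ?thesis
    unfolding w using SS(2) x by (intro vec.span_sum vec.span_base) blast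
qed

lemma aut_invariant_span_components:
  assumes sub: "\<And>S. S \<in> F \<Longrightarrow> vec.subspace S"
    and stable: "\<And>S g. S \<in> F \<Longrightarrow> aut_on UNIV G P g \<Longrightarrow> g ` S \<subseteq> S"
    and inv: "\<And>S. S \<in> F \<Longrightarrow> aut_invariant S G P (W \<inter> S)"
  shows "aut_invariant UNIV G P (vec.span (\<Union>S\<in>F. W \<inter> S))"
  unfolding aut_invariant_def
proof (intro allI impI)
  fix g assume g: "aut_on UNIV G P g"
  have "g ` (W \<inter> S) \<subseteq> W \<inter> S" if "S \<in> F" for S
    using inv[OF that] aut_on_restrict[OF g sub[OF that] stable[OF that g]]
    unfolding aut_invariant_def by blast
  then have "g ` (\<Union>S\<in>F. W \<inter> S) \<subseteq> (\<Union>S\<in>F. W \<inter> S)" by blast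
  have "g ` vec.span (\<Union>S\<in>F. W \<inter> S) \<subseteq> vec.span (g ` (\<Union>S\<in>F. W \<inter> S))"
    by (rule vec.linear_spans_image[OF vec_linear_aut_on[OF g]]) (rule order_refl)
  also have "\<dots> \<subseteq> vec.span (\<Union>S\<in>F. W \<inter> S)"
    by (rule vec.span_mono) fact
  finally show "g ` vec.span (\<Union>S\<in>F. W \<inter> S) \<subseteq> vec.span (\<Union>S\<in>F. W \<inter> S)" .
qed

theorem aut_invariant_iff_components:
  fixes G P :: "'a::field^'n^'n"
  assumes "(2::'a) \<noteq> 0" and span: "vec.span (\<Union>F) = UNIV"
    and splitting: "\<And>S. S \<in> F \<Longrightarrow> orthogonal_splitting G P S (vec.span (\<Union>(F - {S})))"
    and stable: "\<And>S g. S \<in> F \<Longrightarrow> aut_on UNIV G P g \<Longrightarrow> g ` S \<subseteq> S"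
    and W: "vec.subspace W"
  shows "aut_invariant UNIV G P W \<longleftrightarrow>
           W = vec.span (\<Union>S\<in>F. W \<inter> S) \<and> (\<forall>S\<in>F. aut_invariant S G P (W \<inter> S))"
proof
  assume inv: "aut_invariant UNIV G P W"
  have "W = vec.span (\<Union>S\<in>F. W \<inter> S)"
  proof (rule subset_antisym)
    show "W \<subseteq> vec.span (\<Union>S\<in>F. W \<inter> S)"
      using mem_span_components_if_aut_invariant[OF assms(1) span splitting W inv] by blast
    show "vec.span (\<Union>S\<in>F. W \<inter> S) \<subseteq> W" by (rule vec.span_minimal[OF _ W]) blast
  qed
  moreover have "\<forall>S\<in>F. aut_invariant S G P (W \<inter> S)"
    using orthogonal_splitting.aut_invariant_inter[OF splitting inv] by blast
  ultimately show "W = vec.span (\<Union>S\<in>F. W \<inter> S) \<and> (\<forall>S\<in>F. aut_invariant S G P (W \<inter> S))" ..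
next
  assume "W = vec.span (\<Union>S\<in>F. W \<inter> S) \<and> (\<forall>S\<in>F. aut_invariant S G P (W \<inter> S))"
  then have "W = vec.span (\<Union>S\<in>F. W \<inter> S)" and "\<And>S. S \<in> F \<Longrightarrow> aut_invariant S G P (W \<inter> S)"
    by blast+
  moreover have "aut_invariant UNIV G P (vec.span (\<Union>S\<in>F. W \<inter> S))"
  proof (rule aut_invariant_span_components)
    show "vec.subspace S" if "S \<in> F" for S
      using orthogonal_splitting.subspace_S[OF splitting[OF that]] .
  qed (use stable \<open>\<And>S. S \<in> F \<Longrightarrow> aut_invariant S G P (W \<inter> S)\<close> in blast)+
  ultimately show "aut_invariant UNIV G P W" by simp
qed

section \<open>Polynomials in a matrix\<close>

definition poly_op :: "'a::field^'n^'n \<Rightarrow> 'a poly \<Rightarrow> 'a^'n \<Rightarrow> 'a^'n" where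
  "poly_op P p v = (\<Sum>i\<le>degree p. coeff p i *s ((*v) P ^^ i) v)"

lemma poly_op_bound:
  assumes "degree p \<le> m"
  shows "poly_op P p v = (\<Sum>i\<le>m. coeff p i *s ((*v) P ^^ i) v)"
  unfolding poly_op_def
  by (rule sum.mono_neutral_left) (use assms in \<open>auto simp: coeff_eq_0\<close>)

lemma poly_op_0 [simp]: "poly_op P 0 v = 0"
  by (simp add: poly_op_def)

lemma poly_op_const [simp]: "poly_op P [:c:] v = c *s v"
  by (simp add: poly_op_def)

lemma poly_op_1 [simp]: "poly_op P 1 v = v"
  by (simp add: poly_op_def)

lemma poly_op_add: "poly_op P (p + q) v = poly_op P p v + poly_op P q v"
proof -
  define m where "m = max (degree p) (degree q)"
  have "degree (p + q) \<le> m" "degree p \<le> m" "degree q \<le> m"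
    unfolding m_def using degree_add_le_max[of p q] by auto
  then show ?thesis by (simp add: poly_op_bound[of _ m] vec.scale_left_distrib sum.distrib)
qed

lemma poly_op_smult: "poly_op P (smult a p) v = a *s poly_op P p v"
  using degree_smult_le[of a p]
  by (simp add: poly_op_bound[of _ "degree p"] vec.scale_sum_right vec.scale_scale)

lemma poly_op_pCons: "poly_op P (pCons a p) v = a *s v + P *v poly_op P p v"
proof -
  have "poly_op P (pCons a p) v = (\<Sum>i\<le>Suc (degree p). coeff (pCons a p) i *s ((*v) P ^^ i) v)"
    by (rule poly_op_bound) (rule degree_pCons_le)
  also have "\<dots> = a *s v + (\<Sum>i\<le>degree p. coeff p i *s ((*v) P ^^ Suc i) v)"
    unfolding sum.atMost_Suc_shift by simp
  also have "(\<Sum>i\<le>degree p. coeff p i *s ((*v) P ^^ Suc i) v) = P *v poly_op P p v"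
    unfolding poly_op_def
    by (simp add: vec.linear_sum[OF matrix_vector_mul_linear_gen] vector_scalar_commute)
  finally show ?thesis .
qed

lemma poly_op_mult: "poly_op P (p * q) v = poly_op P p (poly_op P q v)"
proof (induction p rule: pCons_induct)
  case (pCons a p)
  have "poly_op P (pCons a p * q) v = poly_op P (smult a q + pCons 0 (p * q)) v" by simp
  then show ?case
    using pCons.IH by (simp add: poly_op_add poly_op_smult poly_op_pCons)
qed simp

lemma vec_linear_poly_op: "vec_linear (poly_op P p)"
proof (rule vec_linearI)
  have L: "vec_linear ((*v) P ^^ i)" for i
    by (rule vec_linear_funpow[OF matrix_vector_mul_linear_gen])
  show "poly_op P p (x + y) = poly_op P p x + poly_op P p y" for x y
    by (simp add: poly_op_def vec.linear_add[OF L] vec.scale_right_distrib sum.distrib)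
  show "poly_op P p (c *s x) = c *s poly_op P p x" for c x
    by (simp add: poly_op_def vec.linear_scale[OF L] vec.scale_sum_right vec.scale_scale mult.commute)
qed

lemma poly_op_commute:
  assumes g: "vec_linear g" and gP: "\<And>u. g (P *v u) = P *v g u"
  shows "g (poly_op P p v) = poly_op P p (g v)"
proof (induction p rule: pCons_induct)
  case 0
  show ?case by (simp add: vec.linear_0[OF g])
next
  case (pCons a p)
  then show ?case by (simp add: poly_op_pCons vec.linear_add[OF g] vec.linear_scale[OF g] gP)
qed

lemma poly_op_power: "(poly_op P p ^^ n) v = poly_op P (p ^ n) v"
  by (induction n arbitrary: v) (simp_all add: poly_op_mult funpow_swap1)

lemma matrix_vector_mult_poly_op: "P *v poly_op P p v = poly_op P p (P *v v)"
  by (rule poly_op_commute[OF matrix_vector_mul_linear_gen]) (rule refl)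

lemma poly_op_swap: "poly_op P p (poly_op P q v) = poly_op P q (poly_op P p v)"
  by (simp only: poly_op_mult[symmetric] mult.commute)

lemma poly_op_self_adjoint:
  assumes "self_adjoint G P"
  shows "bform G (poly_op P p u) v = bform G u (poly_op P p v)"
proof (induction p arbitrary: u v rule: pCons_induct)
  case (pCons a p)
  have P: "bform G (P *v x) y = bform G x (P *v y)" for x y
    using assms unfolding self_adjoint_def by blast
  have "bform G (poly_op P (pCons a p) u) v = a * bform G u v + bform G (poly_op P p u) (P *v v)"
    by (simp add: poly_op_pCons bform_add_left bform_scale_left P)
  also have "\<dots> = a * bform G u v + bform G u (P *v poly_op P p v)"
    by (simp add: pCons.IH matrix_vector_mult_poly_op)
  also have "\<dots> = bform G u (poly_op P (pCons a p) v)"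
    by (simp add: poly_op_pCons bform_add_right bform_scale_right)
  finally show ?case .
qed simp

lemma coprime_poly_bezout:
  fixes p q :: "'a::field_gcd poly"
  assumes "coprime p q"
  obtains u v where "u * p + v * q = 1"
  using bezout_coefficients_fst_snd[of p q] coprime_imp_gcd_eq_1[OF assms] by metis

lemma poly_op_gen_kernel_coprime_eq_0:
  fixes r s :: "'a::field_gcd poly"
  assumes "coprime r s" and "(poly_op P s ^^ n) x = 0" and "poly_op P r x = 0"
  shows "x = 0"
  using assms(2,3)
proof (induction n arbitrary: x)
  case (Suc n)
  have "(poly_op P s ^^ n) (poly_op P s x) = 0" using Suc.prems(1) by (simp add: funpow_swap1)
  moreover have "poly_op P r (poly_op P s x) = 0"
    using Suc.prems(2) by (simp add: poly_op_swap[of P r] vec.linear_0[OF vec_linear_poly_op])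
  ultimately have "poly_op P s x = 0" by (rule Suc.IH)
  obtain u v where "u * r + v * s = 1" using assms(1) by (rule coprime_poly_bezout)
  then have "x = poly_op P (u * r + v * s) x" by simp
  also have "\<dots> = 0"
    using Suc.prems(2) \<open>poly_op P s x = 0\<close>
    by (simp add: poly_op_add poly_op_mult vec.linear_0[OF vec_linear_poly_op])
  finally show ?case .
qed simp

lemma poly_op_image_gen_kernel_coprime:
  fixes r s :: "'a::field_gcd poly"
  assumes "coprime r s"
  shows "poly_op P r ` gen_kernel (poly_op P s) = gen_kernel (poly_op P s)"
proof (rule linear_image_eq_if_inj_on[OF vec_linear_poly_op subspace_gen_kernel[OF vec_linear_poly_op]])
  show "poly_op P r ` gen_kernel (poly_op P s) \<subseteq> gen_kernel (poly_op P s)"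
    by (rule image_gen_kernel_subset[OF vec_linear_poly_op]) (rule poly_op_swap)
  show "inj_on (poly_op P r) (gen_kernel (poly_op P s))"
    unfolding vec.linear_inj_on_iff_eq_0[OF vec_linear_poly_op subspace_gen_kernel[OF vec_linear_poly_op]]
  proof (intro ballI impI)
    fix x assume "x \<in> gen_kernel (poly_op P s)" and "poly_op P r x = 0"
    then obtain n where "(poly_op P s ^^ n) x = 0" unfolding gen_kernel_def by blast
    then show "x = 0" using poly_op_gen_kernel_coprime_eq_0[OF assms] \<open>poly_op P r x = 0\<close> by blast
  qed
qed

lemma poly_op_sum_monom:
  "poly_op P (\<Sum>i\<le>n. monom (c i) i) v = (\<Sum>i\<le>n. c i *s ((*v) P ^^ i) v)"
proof -
  have "degree (\<Sum>i\<le>n. monom (c i) i) \<le> n"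
    by (rule degree_sum_le) (auto intro: order.trans[OF degree_monom_le])
  then show ?thesis by (simp add: poly_op_bound[of _ n] coeff_sum_monom)
qed

lemma poly_op_annihilator_exists:
  fixes P :: "'a::field^'n^'n"
  shows "\<exists>p. p \<noteq> 0 \<and> poly_op P p v = 0"
proof -
  obtain c i where "i \<le> vec.dim (UNIV :: ('a^'n) set)" "c i \<noteq> 0"
    and c: "(\<Sum>i\<le>vec.dim (UNIV :: ('a^'n) set). c i *s ((*v) P ^^ i) v) = 0"
    using vec_family_dependent[of "\<lambda>i. ((*v) P ^^ i) v"] by blast
  define p where "p = (\<Sum>k\<le>vec.dim (UNIV :: ('a^'n) set). monom (c k) k)"
  have "coeff p i = c i" using \<open>i \<le> _\<close> by (simp add: p_def coeff_sum_monom)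
  then have "p \<noteq> 0" using \<open>c i \<noteq> 0\<close> by auto
  moreover have "poly_op P p v = 0" using c by (simp add: p_def poly_op_sum_monom)
  ultimately show ?thesis by blast
qed

section \<open>Primary components\<close>

text \<open>Isabelle's \<^const>\<open>prime\<close> polynomials are the monic irreducible ones, so distinct
  components come from coprime polynomials.\<close>

definition primary_components :: "'a::field_gcd^'n^'n \<Rightarrow> ('a^'n) set set" where
  "primary_components P = {S. S \<noteq> {0} \<and> (\<exists>r. prime r \<and> S = gen_kernel (poly_op P r))}"

lemma span_primary_components_poly_op_preimage:
  assumes r: "prime r" and "poly_op P r v \<in> vec.span (\<Union>(primary_components P))"
  shows "v \<in> vec.span (\<Union>(primary_components P))"
proof (rule mem_of_image_mem_gen_kernel[OF vec_linear_poly_op _ _ vec.subspace_span assms(2)])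
  let ?F = "primary_components P" and ?R = "poly_op P r"
  show "gen_kernel ?R \<subseteq> vec.span (\<Union>?F)"
  proof (cases "gen_kernel ?R = {0}")
    case False
    then have "gen_kernel ?R \<in> ?F" using r unfolding primary_components_def by blast
    then show ?thesis by (blast intro: vec.span_base)
  qed (simp add: vec.span_zero)
  let ?M = "{x + k | x k. x \<in> ?R ` vec.span (\<Union>?F) \<and> k \<in> gen_kernel ?R}"
  have "\<Union>?F \<subseteq> ?M"
  proof
    fix x assume "x \<in> \<Union>?F"
    then obtain S s where S: "S \<in> ?F" "x \<in> S" and s: "prime s" "S = gen_kernel (poly_op P s)"
      unfolding primary_components_def by blast
    show "x \<in> ?M"
    proof (cases "s = r")
      case True
      have "0 \<in> ?R ` vec.span (\<Union>?F)"
        using vec.linear_0[OF vec_linear_poly_op] vec.span_zero by (metis image_eqI)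
      then show ?thesis using S s True by force
    next
      case False
      then have "?R ` S = S"
        using poly_op_image_gen_kernel_coprime[OF primes_coprime[OF r s(1)]] s(2) by auto
      then obtain y where "y \<in> S" "x = ?R y" using S(2) by force
      moreover have "y \<in> vec.span (\<Union>?F)" using \<open>y \<in> S\<close> S(1) by (blast intro: vec.span_base)
      moreover have "0 \<in> gen_kernel ?R" by (simp add: gen_kernel_def exI[of _ 0])
      ultimately show ?thesis by force
    qed
  qed
  then show "vec.span (\<Union>?F) \<subseteq> ?M"
    by (intro vec.span_minimal vec.subspace_sums vec.linear_subspace_image vec_linear_poly_op
        vec.subspace_span subspace_gen_kernel)
qed

lemma mem_span_primary_components_if_annihilated:
  assumes "p \<noteq> 0" and "poly_op P p v = 0"
  shows "v \<in> vec.span (\<Union>(primary_components P))"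
  using assms
proof (induction p arbitrary: v rule: measure_induct_rule[where f = degree])
  case (less p)
  show ?case
  proof (cases "degree p = 0")
    case True
    then obtain c where "p = [:c:]" by (rule degree_eq_zeroE)
    then show ?thesis using less.prems by (simp add: vec.span_zero)
  next
    case False
    then have "\<not> is_unit p" by (simp add: is_unit_iff_degree[OF less.prems(1)])
    with prime_divisor_exists[OF less.prems(1)] obtain r where r: "prime r" "r dvd p" by auto
    from r(2) obtain q where "p = r * q" by (rule dvdE)
    then have p: "p = q * r" by (simp add: mult.commute)
    have "q \<noteq> 0" "r \<noteq> 0" using less.prems(1) p by auto
    have "degree r \<noteq> 0"
      using r(1) not_prime_unit[of r] by (auto simp: is_unit_iff_degree[OF \<open>r \<noteq> 0\<close>])
    then have "degree q < degree p" unfolding p degree_mult_eq[OF \<open>q \<noteq> 0\<close> \<open>r \<noteq> 0\<close>] by simp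
    moreover have "poly_op P q (poly_op P r v) = 0" using less.prems(2) p by (simp add: poly_op_mult)
    ultimately have "poly_op P r v \<in> vec.span (\<Union>(primary_components P))"
      using less.IH[OF _ \<open>q \<noteq> 0\<close>] by blast
    then show ?thesis by (rule span_primary_components_poly_op_preimage[OF r(1)])
  qed
qed

lemma span_primary_components: "vec.span (\<Union>(primary_components P)) = UNIV"
proof -
  have "v \<in> vec.span (\<Union>(primary_components P))" for v
  proof -
    obtain p where "p \<noteq> 0" "poly_op P p v = 0" using poly_op_annihilator_exists by blast
    then show ?thesis by (rule mem_span_primary_components_if_annihilated)
  qed
  then show ?thesis by auto
qed

lemma gen_kernel_poly_op_matrix_vector_mult:
  assumes "x \<in> gen_kernel (poly_op P r)"
  shows "P *v x \<in> gen_kernel (poly_op P r)"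
proof -
  have "(*v) P ` gen_kernel (poly_op P r) \<subseteq> gen_kernel (poly_op P r)"
    by (rule image_gen_kernel_subset[OF matrix_vector_mul_linear_gen]) (rule matrix_vector_mult_poly_op)
  then show ?thesis using assms by blast
qed

lemma orthogonal_splitting_gen_kernel:
  assumes sa: "self_adjoint G P" and T: "vec.subspace T" "\<And>x. x \<in> T \<Longrightarrow> P *v x \<in> T"
    and range: "\<And>n. T \<subseteq> range (poly_op P (r ^ n))"
    and sum: "\<And>w. \<exists>s\<in>gen_kernel (poly_op P r). w - s \<in> T"
  shows "orthogonal_splitting G P (gen_kernel (poly_op P r)) T"
proof
  \<comment> \<open>\<open>r(P)\<^sup>N\<close> kills \<open>S\<close> for a single \<open>N\<close>, while \<open>T\<close> lies in its range.\<close>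
  let ?S = "gen_kernel (poly_op P r)"
  obtain N where N: "\<And>v. v \<in> ?S \<Longrightarrow> poly_op P (r ^ N) v = 0"
    using gen_kernel_uniform[OF vec_linear_poly_op] by (metis poly_op_power)
  show "vec.subspace ?S" by (rule subspace_gen_kernel[OF vec_linear_poly_op])
  show "P *v x \<in> ?S" if "x \<in> ?S" for x
    using that by (rule gen_kernel_poly_op_matrix_vector_mult)
  show "x = 0" if "x \<in> ?S" "x \<in> T" for x
  proof -
    obtain y where y: "x = poly_op P (r ^ N) y" using range \<open>x \<in> T\<close> by blast
    have "poly_op P (r ^ (N + N)) y = 0"
      using N[OF \<open>x \<in> ?S\<close>] y by (simp add: power_add poly_op_mult)
    then have "y \<in> ?S" unfolding gen_kernel_def poly_op_power[symmetric] by blast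
    then show "x = 0" using N y by simp
  qed
  show "bform G s t = 0 \<and> bform G t s = 0" if "s \<in> ?S" "t \<in> T" for s t
  proof -
    obtain y where y: "t = poly_op P (r ^ N) y" using range \<open>t \<in> T\<close> by blast
    have "bform G s t = bform G (poly_op P (r ^ N) s) y"
      unfolding y by (rule poly_op_self_adjoint[OF sa, symmetric])
    moreover have "bform G t s = bform G y (poly_op P (r ^ N) s)"
      unfolding y by (rule poly_op_self_adjoint[OF sa])
    ultimately show ?thesis using N[OF \<open>s \<in> ?S\<close>] by simp
  qed
qed (fact T sum)+

lemma primary_component_subset_range:
  assumes r: "prime r" and "S \<in> primary_components P" and "S \<noteq> gen_kernel (poly_op P r)"
  shows "S \<subseteq> range (poly_op P (r ^ n))"
proof -
  obtain s where "prime s" and S: "S = gen_kernel (poly_op P s)"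
    using assms(2) unfolding primary_components_def by blast
  then have "coprime (r ^ n) s" using assms(3) primes_coprime[OF r] by auto
  then show ?thesis using poly_op_image_gen_kernel_coprime[of "r ^ n" s P] S by blast
qed

lemma orthogonal_splitting_primary_component:
  assumes sa: "self_adjoint G P" and S: "S \<in> primary_components P"
  shows "orthogonal_splitting G P S (vec.span (\<Union>(primary_components P - {S})))"
proof -
  let ?F = "primary_components P"
  let ?T = "vec.span (\<Union>(?F - {S}))"
  obtain r where r: "prime r" "S = gen_kernel (poly_op P r)"
    using S unfolding primary_components_def by blast
  have range: "?T \<subseteq> range (poly_op P (r ^ n))" for n
  proof (rule vec.span_minimal)
    show "\<Union>(?F - {S}) \<subseteq> range (poly_op P (r ^ n))"
      using primary_component_subset_range[OF r(1)] r(2) by blast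
  qed (rule vec.linear_subspace_image[OF vec_linear_poly_op vec.subspace_UNIV])
  have P_T: "P *v x \<in> ?T" if "x \<in> ?T" for x
    using gen_kernel_poly_op_matrix_vector_mult that unfolding primary_components_def
    by (intro matrix_vector_mult_span) blast+
  have sum: "\<exists>s\<in>gen_kernel (poly_op P r). w - s \<in> ?T" for w
  proof -
    have "\<Union>?F = S \<union> \<Union>(?F - {S})" using S by blast
    then have "w \<in> vec.span (S \<union> \<Union>(?F - {S}))" using span_primary_components[of P] by simp
    then obtain s t where "s \<in> vec.span S" "t \<in> ?T" "w = s + t" unfolding vec.span_Un by blast
    moreover have "vec.span S = S"
      unfolding r(2) by (simp only: vec.span_eq_iff subspace_gen_kernel[OF vec_linear_poly_op])
    ultimately show ?thesis using r(2) by force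
  qed
  have "orthogonal_splitting G P (gen_kernel (poly_op P r)) ?T"
    by (rule orthogonal_splitting_gen_kernel[OF sa vec.subspace_span P_T range sum])
  then show ?thesis by (simp only: r(2))
qed

lemma aut_on_image_primary_component:
  assumes "S \<in> primary_components P" and g: "aut_on UNIV G P g"
  shows "g ` S \<subseteq> S"
proof -
  obtain r where "S = gen_kernel (poly_op P r)"
    using assms(1) unfolding primary_components_def by blast
  moreover have "g ` gen_kernel (poly_op P r) \<subseteq> gen_kernel (poly_op P r)"
  proof (rule image_gen_kernel_subset[OF vec_linear_aut_on[OF g]])
    show "g (poly_op P r x) = poly_op P r (g x)" for x
      using g by (intro poly_op_commute[OF vec_linear_aut_on[OF g]]) (simp add: aut_on_def)
  qed
  ultimately show ?thesis by simp
qed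

theorem aut_invariant_iff_primary_components:
  fixes G P :: "'a::field_gcd^'n^'n"
  assumes "(2::'a) \<noteq> 0" and "self_adjoint G P" and "vec.subspace W"
  shows "aut_invariant UNIV G P W \<longleftrightarrow>
           W = vec.span (\<Union>S\<in>primary_components P. W \<inter> S) \<and>
           (\<forall>S\<in>primary_components P. aut_invariant S G P (W \<inter> S))"
  using assms(1) span_primary_components orthogonal_splitting_primary_component[OF assms(2)]
    aut_on_image_primary_component assms(3)
  by (rule aut_invariant_iff_components)

section \<open>Generalized eigenspaces over the real and complex numbers\<close>

lemma poly_op_linear: "poly_op P [:-c, 1:] x = P *v x - c *s x"
  by (simp add: poly_op_pCons vec.scale_minus_left)

lemma poly_op_quadratic:
  "poly_op P [:k, -m, 1:] x = P *v (P *v x) - m *s (P *v x) + k *s x"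
  by (simp add: poly_op_pCons vec.scale_minus_left matrix_vector_right_distrib
      vector_scalar_commute vec.linear_neg[OF matrix_vector_mul_linear_gen] algebra_simps)

lemma gen_eigenspace_eq_gen_kernel: "gen_eigenspace P c = gen_kernel (poly_op P [:-c, 1:])"
proof -
  have "(\<lambda>x. P *v x - c *s x) = poly_op P [:-c, 1:]" by (simp add: fun_eq_iff poly_op_linear)
  then show ?thesis by (simp add: gen_eigenspace_def gen_kernel_def)
qed

lemma gen_eigenspace_pair_eq_gen_kernel:
  "gen_eigenspace_pair P a b = gen_kernel (poly_op P [:a^2 + b^2, -(2 * a), 1:])"
proof -
  have "(\<lambda>x. P *v (P *v x) - (2 * a) *s (P *v x) + (a^2 + b^2) *s x) = poly_op P [:a^2 + b^2, -(2 * a), 1:]"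
    by (simp add: fun_eq_iff poly_op_quadratic)
  then show ?thesis by (simp add: gen_eigenspace_pair_def gen_kernel_def)
qed

lemma prime_linear_poly: "prime [:-c, 1::'a::field_gcd:]"
  using prime_elem_linear_field_poly[of 1 "-c"]
  by (simp add: prime_def normalize_poly_def pCons_one)

lemma degree_1_poly_root:
  fixes p :: "'a::field poly"
  assumes "degree p = 1"
  obtains t where "poly p t = 0"
proof -
  obtain a b where "p = [:b, a:]" "a \<noteq> 0" using assms by (rule degree1_coeffs)
  then have "poly p (- b / a) = 0" by simp
  then show ?thesis by (rule that)
qed

lemma prime_real_quadratic:
  fixes a b :: real
  assumes "b > 0"
  shows "prime [:a^2 + b^2, -(2 * a), 1:]"
proof -
  let ?q = "[:a^2 + b^2, -(2 * a), 1:]"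
  have no_root: "poly ?q t \<noteq> 0" for t
  proof -
    have "poly ?q t = (t - a)^2 + b^2" by (simp add: power2_eq_square algebra_simps)
    also have "\<dots> > 0" using assms by (intro add_nonneg_pos) auto
    finally show ?thesis by simp
  qed
  have "irreducible ?q"
  proof (rule irreducibleI)
    fix x y assume xy: "?q = x * y"
    then have "x \<noteq> 0" "y \<noteq> 0" by auto
    have "degree f \<noteq> 1" if "?q = f * g" for f g
    proof
      assume "degree f = 1"
      then obtain t where "poly f t = 0" by (rule degree_1_poly_root)
      then show False using no_root[of t] that by simp
    qed
    then have "degree x \<noteq> 1" "degree y \<noteq> 1" using xy by (metis mult.commute)+
    moreover have "degree x + degree y = 2"
      using degree_mult_eq[OF \<open>x \<noteq> 0\<close> \<open>y \<noteq> 0\<close>] xy[symmetric] by simp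
    ultimately show "is_unit x \<or> is_unit y"
      using is_unit_iff_degree[OF \<open>x \<noteq> 0\<close>] is_unit_iff_degree[OF \<open>y \<noteq> 0\<close>] by auto
  qed (simp_all add: is_unit_iff_degree)
  then show ?thesis by (simp add: prime_def prime_elem_iff_irreducible normalize_poly_def pCons_one)
qed

lemma map_poly_of_real_add:
  "map_poly complex_of_real (p + q) = map_poly of_real p + map_poly of_real q"
  by (rule poly_eqI) (simp add: coeff_map_poly)

lemma map_poly_of_real_mult:
  "map_poly complex_of_real (p * q) = map_poly of_real p * map_poly of_real q"
  by (rule poly_eqI) (simp add: coeff_map_poly coeff_mult)

lemma real_primes_eq_if_common_root:
  fixes p q :: "real poly"
  assumes "prime p" "prime q"
    and "poly (map_poly complex_of_real p) z = 0" "poly (map_poly complex_of_real q) z = 0"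
  shows "p = q"
proof (rule ccontr)
  assume "p \<noteq> q"
  then obtain u v where "u * p + v * q = 1" using primes_coprime[OF assms(1,2)] coprime_poly_bezout by blast
  then have "poly (map_poly complex_of_real (u * p + v * q)) z = 1" by simp
  then show False using assms(3,4) by (simp add: map_poly_of_real_add map_poly_of_real_mult)
qed

lemma prime_complex_poly_iff: "prime (r :: complex poly) \<longleftrightarrow> (\<exists>c. r = [:-c, 1:])"
proof
  assume r: "prime r"
  then have "degree r \<noteq> 0" using not_prime_unit is_unit_iff_degree[of r] by auto
  then have "\<not> constant (poly r)" by (simp add: constant_degree)
  then obtain z where "poly r z = 0" using fundamental_theorem_of_algebra by blast
  then have "[:-z, 1:] dvd r" by (simp add: poly_eq_0_iff_dvd)
  then show "\<exists>c. r = [:-c, 1:]" using primes_dvd_imp_eq[OF prime_linear_poly r] by blast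
qed (auto simp: prime_linear_poly)

lemma prime_real_poly_iff:
  "prime (r :: real poly) \<longleftrightarrow>
     (\<exists>c. r = [:-c, 1:]) \<or> (\<exists>a b. b > 0 \<and> r = [:a^2 + b^2, -(2 * a), 1:])"
proof
  assume r: "prime r"
  then have "degree (map_poly complex_of_real r) \<noteq> 0"
    using not_prime_unit is_unit_iff_degree[of r] by (auto simp: degree_map_poly)
  then have "\<not> constant (poly (map_poly complex_of_real r))" by (simp add: constant_degree)
  then obtain z where z: "poly (map_poly complex_of_real r) z = 0"
    using fundamental_theorem_of_algebra by blast
  show "(\<exists>c. r = [:-c, 1:]) \<or> (\<exists>a b. b > 0 \<and> r = [:a^2 + b^2, -(2 * a), 1:])"
  proof (cases "Im z = 0")
    case True
    then have "poly (map_poly complex_of_real [:-Re z, 1:]) z = 0"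
      by (simp add: complex_eq_iff map_poly_pCons)
    then show ?thesis using real_primes_eq_if_common_root[OF prime_linear_poly r _ z] by blast
  next
    case False
    define b where "b = \<bar>Im z\<bar>"
    have "b > 0" using False by (simp add: b_def)
    have "b * b = Im z * Im z" by (simp add: b_def abs_mult_self_eq)
    then have "poly (map_poly complex_of_real [:Re z^2 + b^2, -(2 * Re z), 1:]) z = 0"
      by (simp add: complex_eq_iff map_poly_pCons power2_eq_square algebra_simps)
    then show ?thesis
      using real_primes_eq_if_common_root[OF prime_real_quadratic[OF \<open>b > 0\<close>] r _ z] \<open>b > 0\<close>
      by blast
  qed
qed (auto simp: prime_linear_poly prime_real_quadratic)

lemma gen_eigenspaces_complex_eq_primary_components:
  "gen_eigenspaces_complex P = primary_components P"
  unfolding gen_eigenspaces_complex_def primary_components_def prime_complex_poly_iff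
    gen_eigenspace_eq_gen_kernel by blast

lemma gen_eigenspaces_real_eq_primary_components:
  "gen_eigenspaces_real P = primary_components P"
  unfolding gen_eigenspaces_real_def primary_components_def prime_real_poly_iff
    gen_eigenspace_eq_gen_kernel gen_eigenspace_pair_eq_gen_kernel by blast

theorem theorem6:
  shows "(\<forall>(G::real^'n^'n) (P::real^'n^'n) (W::(real^'n) set).
            symplectic G \<and> self_adjoint G P \<and> vec.subspace W \<longrightarrow>
            (aut_invariant UNIV G P W \<longleftrightarrow>
               W = vec.span (\<Union>S\<in>gen_eigenspaces_real P. W \<inter> S) \<and>
               (\<forall>S\<in>gen_eigenspaces_real P. aut_invariant S G P (W \<inter> S))))
       \<and> (\<forall>(G::complex^'m^'m) (P::complex^'m^'m) (W::(complex^'m) set).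
            symplectic G \<and> self_adjoint G P \<and> vec.subspace W \<longrightarrow>
            (aut_invariant UNIV G P W \<longleftrightarrow>
               W = vec.span (\<Union>S\<in>gen_eigenspaces_complex P. W \<inter> S) \<and>
               (\<forall>S\<in>gen_eigenspaces_complex P. aut_invariant S G P (W \<inter> S))))"
  unfolding gen_eigenspaces_real_eq_primary_components gen_eigenspaces_complex_eq_primary_components
  by (intro conjI allI impI aut_invariant_iff_primary_components) simp_all

end
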